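(* Let $R$ be a commutative ring, $\mathcal{M}$ a nonempty set, $X$ a set, $A(X)$ the free $\mathcal{M}$-algebra over $R$ on $X$, and $F=\bigoplus_{x\in X}Rx$. Let $A$ be an $\mathcal{M}$-algebra over $R$ containing a copy of $F$ as an $R$-submodule (so elements of $X$ are viewed as elements of $A$), and suppose that $F$ generates $A$ as an $\mathcal{M}$-algebra. Let $\operatorname{Aut}(A,F)=\{\theta\in\operatorname{Aut}(A)\mid\theta(F)=F\}$ and $\operatorname{Aut}(A(X),F)=\{\varphi\in\operatorname{Aut}(A(X))\mid\varphi(F)=F\}$. Then: (i) The map $\operatorname{Aut}(A,F)\to\operatorname{Aut}(A(X),F)$, $\theta\mapsto\widetilde{\theta}:=\widetilde{\theta|_F}$, where $\widetilde{\theta|_F}$ is the unique $\mathcal{M}$-algebra endomorphism of $A(X)$ extending $x\mapsto\theta(x)$ for $x\in X$, is a group monomorphism. (ii) There exists a unique surjective $\mathcal{M}$-algebra homomorphism $\eta\colon A(X)\to A$ that is the identity on $X$. (iii) Letting $I=\ker\eta$, the image of the map in (i) consists exactly of those $\varphi\in\operatorname{Aut}(A(X),F)$ with $\varphi(I)=I$.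
   Context: An $\mathcal{M}$-algebra over $R$ is an $R$-module $A$ together with a family of $R$-bilinear maps $A\times A\to A$, $(a,b)\mapsto a_m b$, indexed by $m\in\mathcal{M}$; homomorphisms are $R$-linear maps preserving all $m$-products, and $\operatorname{Aut}(A)$ is the group of $\mathcal{M}$-algebra automorphisms. A subset generates $A$ if the smallest $R$-submodule containing it and closed under all $m$-products is $A$. The free $\mathcal{M}$-magma $M(X)$ is defined by $M^1(X)=X$, $M^k(X)=\coprod_{1\le j<k,\ m\in\mathcal{M}} M^j(X)\times\{m\}\times M^{k-j}(X)$, $M(X)=\coprod_{k\ge1}M^k(X)$, $a_m b=(a,m,b)$; the free $\mathcal{M}$-algebra $A(X)$ is the free $R$-module on $M(X)$ with bilinearly extended $m$-products, and it satisfies: every set map from $X$ to an $\mathcal{M}$-algebra extends uniquely to an $\mathcal{M}$-algebra homomorphism from $A(X)$. Here $F=\bigoplus_{x\in X}Rx\subset A(X)$. *)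

theory Defs
  imports Main "HOL-Library.Poly_Mapping"
begin

(* Free M-magma on X: the index set M is the type 'm, the generating set X is the type 'x *)
datatype ('x, 'm) magma = Gen 'x | Op "('x, 'm) magma" 'm "('x, 'm) magma"

(* Free M-algebra A(X): the free R-module on M(X), i.e. finitely supported maps M(X) -> R *)
type_synonym ('x, 'm, 'r) freealg = "('x, 'm) magma \<Rightarrow>\<^sub>0 'r"

definition fsmult :: "'r::comm_ring_1 \<Rightarrow> ('x, 'm, 'r) freealg \<Rightarrow> ('x, 'm, 'r) freealg" where
  "fsmult r f = Poly_Mapping.map (\<lambda>c. r * c) f"

definition fmult :: "'m \<Rightarrow> ('x, 'm, 'r::comm_ring_1) freealg \<Rightarrow> ('x, 'm, 'r) freealg \<Rightarrow> ('x, 'm, 'r) freealg" where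
  "fmult m f g = (\<Sum>s\<in>Poly_Mapping.keys f. \<Sum>t\<in>Poly_Mapping.keys g. Poly_Mapping.single (Op s m t) (Poly_Mapping.lookup f s * Poly_Mapping.lookup g t))"

definition fgen :: "'x \<Rightarrow> ('x, 'm, 'r::comm_ring_1) freealg" where
  "fgen x = Poly_Mapping.single (Gen x) 1"

definition Malg :: "('r::comm_ring_1 \<Rightarrow> 'a::ab_group_add \<Rightarrow> 'a) \<Rightarrow> ('m \<Rightarrow> 'a \<Rightarrow> 'a \<Rightarrow> 'a) \<Rightarrow> bool" where
  "Malg sc mul \<longleftrightarrow>
     (\<forall>r a b. sc r (a + b) = sc r a + sc r b) \<and>
     (\<forall>r s a. sc (r + s) a = sc r a + sc s a) \<and>
     (\<forall>r s a. sc (r * s) a = sc r (sc s a)) \<and>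
     (\<forall>a. sc 1 a = a) \<and>
     (\<forall>m a b c. mul m (a + b) c = mul m a c + mul m b c) \<and>
     (\<forall>m a b c. mul m a (b + c) = mul m a b + mul m a c) \<and>
     (\<forall>m r a b. mul m (sc r a) b = sc r (mul m a b)) \<and>
     (\<forall>m r a b. mul m a (sc r b) = sc r (mul m a b))"

definition Mhom :: "('r::comm_ring_1 \<Rightarrow> 'a::ab_group_add \<Rightarrow> 'a) \<Rightarrow> ('m \<Rightarrow> 'a \<Rightarrow> 'a \<Rightarrow> 'a)
    \<Rightarrow> ('r \<Rightarrow> 'b::ab_group_add \<Rightarrow> 'b) \<Rightarrow> ('m \<Rightarrow> 'b \<Rightarrow> 'b \<Rightarrow> 'b) \<Rightarrow> ('a \<Rightarrow> 'b) \<Rightarrow> bool" where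
  "Mhom sc1 mul1 sc2 mul2 f \<longleftrightarrow>
     (\<forall>a b. f (a + b) = f a + f b) \<and>
     (\<forall>r a. f (sc1 r a) = sc2 r (f a)) \<and>
     (\<forall>m a b. f (mul1 m a b) = mul2 m (f a) (f b))"

definition Maut :: "('r::comm_ring_1 \<Rightarrow> 'a::ab_group_add \<Rightarrow> 'a) \<Rightarrow> ('m \<Rightarrow> 'a \<Rightarrow> 'a \<Rightarrow> 'a) \<Rightarrow> ('a \<Rightarrow> 'a) set" where
  "Maut sc mul = {f. Mhom sc mul sc mul f \<and> bij f}"

definition MautF :: "('r::comm_ring_1 \<Rightarrow> 'a::ab_group_add \<Rightarrow> 'a) \<Rightarrow> ('m \<Rightarrow> 'a \<Rightarrow> 'a \<Rightarrow> 'a) \<Rightarrow> 'a set \<Rightarrow> ('a \<Rightarrow> 'a) set" where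
  "MautF sc mul F = {f \<in> Maut sc mul. f ` F = F}"

definition Rspan :: "('r::comm_ring_1 \<Rightarrow> 'a::ab_group_add \<Rightarrow> 'a) \<Rightarrow> ('x \<Rightarrow> 'a) \<Rightarrow> 'a set" where
  "Rspan sc e = {(\<Sum>x\<in>S. sc (c x) (e x)) | S c. finite S}"

(* the family e is R-linearly independent, i.e. its span is a copy of the free module on 'x *)
definition Rindep :: "('r::comm_ring_1 \<Rightarrow> 'a::ab_group_add \<Rightarrow> 'a) \<Rightarrow> ('x \<Rightarrow> 'a) \<Rightarrow> bool" where
  "Rindep sc e \<longleftrightarrow> (\<forall>S c. finite S \<longrightarrow> (\<Sum>x\<in>S. sc (c x) (e x)) = 0 \<longrightarrow> (\<forall>x\<in>S. c x = 0))"

definition Mclosed :: "('r::comm_ring_1 \<Rightarrow> 'a::ab_group_add \<Rightarrow> 'a) \<Rightarrow> ('m \<Rightarrow> 'a \<Rightarrow> 'a \<Rightarrow> 'a) \<Rightarrow> 'a set \<Rightarrow> bool" where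
  "Mclosed sc mul B \<longleftrightarrow> 0 \<in> B \<and> (\<forall>a\<in>B. \<forall>b\<in>B. a + b \<in> B) \<and> (\<forall>r. \<forall>a\<in>B. sc r a \<in> B)
      \<and> (\<forall>m. \<forall>a\<in>B. \<forall>b\<in>B. mul m a b \<in> B)"

definition Mgenerated :: "('r::comm_ring_1 \<Rightarrow> 'a::ab_group_add \<Rightarrow> 'a) \<Rightarrow> ('m \<Rightarrow> 'a \<Rightarrow> 'a \<Rightarrow> 'a) \<Rightarrow> 'a set \<Rightarrow> 'a set" where
  "Mgenerated sc mul S = \<Inter>{B. S \<subseteq> B \<and> Mclosed sc mul B}"

definition freeF :: "('x, 'm, 'r::comm_ring_1) freealg set" where
  "freeF = Rspan fsmult fgen"

(* the identification of F inside A(X) with the copy of F inside A (x |-> e x) *)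
definition Fiso :: "('r::comm_ring_1 \<Rightarrow> 'a::ab_group_add \<Rightarrow> 'a) \<Rightarrow> ('x \<Rightarrow> 'a) \<Rightarrow> ('x, 'm, 'r) freealg \<Rightarrow> 'a" where
  "Fiso sc e f = (\<Sum>s\<in>Poly_Mapping.keys f. (case s of Gen x \<Rightarrow> sc (Poly_Mapping.lookup f s) (e x) | Op _ _ _ \<Rightarrow> 0))"

definition tilde :: "('r::comm_ring_1 \<Rightarrow> 'a::ab_group_add \<Rightarrow> 'a) \<Rightarrow> ('x \<Rightarrow> 'a) \<Rightarrow> ('a \<Rightarrow> 'a)
    \<Rightarrow> (('x, 'm, 'r) freealg \<Rightarrow> ('x, 'm, 'r) freealg)" where
  "tilde sc e \<theta> = (THE \<phi>. Mhom fsmult fmult fsmult fmult \<phi> \<and>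
       (\<forall>x. \<phi> (fgen x) \<in> freeF \<and> Fiso sc e (\<phi> (fgen x)) = \<theta> (e x)))"

end

theory Submission
  imports Defs
begin

(* Let eta : A(X) -> A be the homomorphism extending x |-> x; it is onto because F generates A.
   As F is free on X, an automorphism theta of A preserving F has exactly one lift theta~ sending
   generators into F, and it satisfies eta o theta~ = theta o eta.  Uniqueness of lifts makes
   theta |-> theta~ multiplicative, and it is injective because theta is determined on X.
   Conversely an automorphism phi of A(X) preserving F and I = ker eta descends along eta to an
   automorphism theta of A preserving F, and phi = theta~ because phi lifts theta. *)

section \<open>The free M-algebra\<close>

lemma lookup_fsmult: "Poly_Mapping.lookup (fsmult r f) s = r * Poly_Mapping.lookup f s"
  by (simp add: fsmult_def map.rep_eq when_def)

lemma fsmult_single: "fsmult r (Poly_Mapping.single w c) = Poly_Mapping.single w (r * c)"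
  by (simp add: fsmult_def)

lemma keys_fsmult: "Poly_Mapping.keys (fsmult r f) \<subseteq> Poly_Mapping.keys f"
  by (auto simp: in_keys_iff lookup_fsmult)

lemma fsmult_add: "fsmult r (a + b) = fsmult r a + fsmult r b"
  by (rule poly_mapping_eqI) (simp add: lookup_fsmult lookup_add distrib_left)

lemma fsmult_zero: "fsmult r 0 = 0"
  by (rule poly_mapping_eqI) (simp add: lookup_fsmult)

lemma fsmult_sum: "fsmult r (\<Sum>i\<in>I. g i) = (\<Sum>i\<in>I. fsmult r (g i))"
  by (induction I rule: infinite_finite_induct) (simp_all add: fsmult_add fsmult_zero)

lemma poly_mapping_sum_single:
  assumes "finite S" "Poly_Mapping.keys f \<subseteq> S"
  shows "f = (\<Sum>s\<in>S. Poly_Mapping.single s (Poly_Mapping.lookup f s))"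
  by (rule poly_mapping_eqI) (use assms in \<open>auto simp: lookup_sum lookup_single when_def in_keys_iff\<close>)

lemma fmult_eq_sum_over:
  assumes "finite S" "Poly_Mapping.keys f \<subseteq> S" "finite T" "Poly_Mapping.keys g \<subseteq> T"
  shows "fmult m f g = (\<Sum>s\<in>S. \<Sum>t\<in>T.
           Poly_Mapping.single (Op s m t) (Poly_Mapping.lookup f s * Poly_Mapping.lookup g t))"
proof -
  have "fmult m f g = (\<Sum>s\<in>S. \<Sum>t\<in>Poly_Mapping.keys g.
          Poly_Mapping.single (Op s m t) (Poly_Mapping.lookup f s * Poly_Mapping.lookup g t))"
    unfolding fmult_def using assms by (intro sum.mono_neutral_left) (auto simp: in_keys_iff)
  also have "\<dots> = (\<Sum>s\<in>S. \<Sum>t\<in>T.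
          Poly_Mapping.single (Op s m t) (Poly_Mapping.lookup f s * Poly_Mapping.lookup g t))"
    using assms by (intro sum.cong refl sum.mono_neutral_left) (auto simp: in_keys_iff)
  finally show ?thesis .
qed

lemma Malg_free: "Malg (fsmult :: 'r::comm_ring_1 \<Rightarrow> _) (fmult :: 'm \<Rightarrow> ('x, 'm, 'r) freealg \<Rightarrow> _)"
  unfolding Malg_def
proof (intro conjI allI)
  fix r s :: 'r and a b c :: "('x, 'm, 'r) freealg" and m :: 'm
  show "fsmult r (a + b) = fsmult r a + fsmult r b" by (rule fsmult_add)
  show "fsmult (r + s) a = fsmult r a + fsmult s a"
    by (rule poly_mapping_eqI) (simp add: lookup_fsmult lookup_add distrib_right)
  show "fsmult (r * s) a = fsmult r (fsmult s a)"
    by (rule poly_mapping_eqI) (simp add: lookup_fsmult)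
  show "fsmult 1 a = a"
    by (rule poly_mapping_eqI) (simp add: lookup_fsmult)
  let ?S = "Poly_Mapping.keys a \<union> Poly_Mapping.keys b \<union> Poly_Mapping.keys (a + b)"
  let ?T = "Poly_Mapping.keys b \<union> Poly_Mapping.keys c \<union> Poly_Mapping.keys (b + c)"
  show "fmult m (a + b) c = fmult m a c + fmult m b c"
    by (subst (1 2 3) fmult_eq_sum_over[where S = ?S and T = "Poly_Mapping.keys c"])
       (auto simp: lookup_add distrib_right single_add sum.distrib)
  show "fmult m a (b + c) = fmult m a b + fmult m a c"
    by (subst (1 2 3) fmult_eq_sum_over[where S = "Poly_Mapping.keys a" and T = ?T])
       (auto simp: lookup_add distrib_left single_add sum.distrib)
  show "fmult m (fsmult r a) b = fsmult r (fmult m a b)"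
    by (subst (1 2) fmult_eq_sum_over[where S = "Poly_Mapping.keys a" and T = "Poly_Mapping.keys b"])
       (auto simp: keys_fsmult lookup_fsmult fsmult_sum fsmult_single mult.assoc)
  show "fmult m a (fsmult r b) = fsmult r (fmult m a b)"
    by (subst (1 2) fmult_eq_sum_over[where S = "Poly_Mapping.keys a" and T = "Poly_Mapping.keys b"])
       (auto simp: keys_fsmult lookup_fsmult fsmult_sum fsmult_single mult.left_commute)
qed

section \<open>Homomorphisms and generated subalgebras\<close>

lemma additive_zero:
  fixes f :: "'a::ab_group_add \<Rightarrow> 'b::ab_group_add"
  assumes "\<And>a b. f (a + b) = f a + f b"
  shows "f 0 = 0"
  using assms[of 0 0] by simp

lemma Mhom_add: "Mhom sc1 mul1 sc2 mul2 f \<Longrightarrow> f (a + b) = f a + f b"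
  and Mhom_sc: "Mhom sc1 mul1 sc2 mul2 f \<Longrightarrow> f (sc1 r a) = sc2 r (f a)"
  and Mhom_mul: "Mhom sc1 mul1 sc2 mul2 f \<Longrightarrow> f (mul1 m a b) = mul2 m (f a) (f b)"
  by (simp_all add: Mhom_def)

lemma Mhom_zero: "Mhom sc1 mul1 sc2 mul2 f \<Longrightarrow> f 0 = 0"
  by (rule additive_zero) (rule Mhom_add)

lemma Mhom_diff: "Mhom sc1 mul1 sc2 mul2 f \<Longrightarrow> f (a - b) = f a - f b"
  by (metis Mhom_add eq_diff_eq)

lemma Mhom_sum_sc:
  "Mhom sc1 mul1 sc2 mul2 f \<Longrightarrow> f (\<Sum>i\<in>I. sc1 (c i) (g i)) = (\<Sum>i\<in>I. sc2 (c i) (f (g i)))"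
  by (induction I rule: infinite_finite_induct) (auto simp: Mhom_add Mhom_zero Mhom_sc)

lemma Mhom_comp:
  "Mhom sc1 mul1 sc2 mul2 f \<Longrightarrow> Mhom sc2 mul2 sc3 mul3 g \<Longrightarrow> Mhom sc1 mul1 sc3 mul3 (g \<circ> f)"
  by (simp add: Mhom_def)

lemma Mhom_inv:
  assumes f: "Mhom sc mul sc mul f" and "bij f"
  shows "Mhom sc mul sc mul (inv f)"
proof -
  have inv_f: "inv f (f a) = a" and f_inv: "f (inv f a) = a" for a
    using \<open>bij f\<close> by (simp_all add: bij_is_inj bij_is_surj surj_f_inv_f)
  show ?thesis
    unfolding Mhom_def
    by (metis inv_f f_inv Mhom_add[OF f] Mhom_sc[OF f] Mhom_mul[OF f])
qed

lemma MautF_inv: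
  assumes "\<theta> \<in> MautF sc mul F"
  shows "inv \<theta> \<in> MautF sc mul F"
proof -
  have \<theta>: "Mhom sc mul sc mul \<theta>" "bij \<theta>" "\<theta> ` F = F"
    using assms by (auto simp: MautF_def Maut_def)
  have "inv \<theta> ` F = F"
    using image_inv_f_f[OF bij_is_inj[OF \<theta>(2)], of F] \<theta>(3) by simp
  then show ?thesis
    using \<theta> by (simp add: MautF_def Maut_def Mhom_inv bij_imp_bij_inv)
qed

lemma Mclosed_sum: "Mclosed sc mul B \<Longrightarrow> (\<And>i. i \<in> I \<Longrightarrow> g i \<in> B) \<Longrightarrow> (\<Sum>i\<in>I. g i) \<in> B"
  unfolding Mclosed_def by (induction I rule: infinite_finite_induct) auto

lemma Mgenerated_least: "S \<subseteq> B \<Longrightarrow> Mclosed sc mul B \<Longrightarrow> Mgenerated sc mul S \<subseteq> B"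
  unfolding Mgenerated_def by blast

lemma Mhom_eqI_generated:
  assumes "Mgenerated sc1 mul1 S = UNIV" "Mhom sc1 mul1 sc2 mul2 f" "Mhom sc1 mul1 sc2 mul2 g"
    and "\<And>s. s \<in> S \<Longrightarrow> f s = g s"
  shows "f = g"
proof -
  have "Mclosed sc1 mul1 {a. f a = g a}"
    using assms(2,3) by (simp add: Mclosed_def Mhom_zero Mhom_add Mhom_sc Mhom_mul)
  then have "Mgenerated sc1 mul1 S \<subseteq> {a. f a = g a}"
    using assms(4) by (intro Mgenerated_least) auto
  then show ?thesis using assms(1) by auto
qed

lemma Mhom_surj_generated:
  assumes "Mgenerated sc2 mul2 S = UNIV" and f: "Mhom sc1 mul1 sc2 mul2 f" and "S \<subseteq> range f"
  shows "surj f"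
proof -
  have "Mclosed sc2 mul2 (range f)"
    unfolding Mclosed_def
    by (auto simp: Mhom_zero[OF f, symmetric] Mhom_add[OF f, symmetric] Mhom_sc[OF f, symmetric]
        Mhom_mul[OF f, symmetric])
  then have "Mgenerated sc2 mul2 S \<subseteq> range f"
    using assms(3) by (rule Mgenerated_least[rotated])
  then show ?thesis using assms(1) by auto
qed

lemma single_Op:
  "Poly_Mapping.single (Op s m t) (1::'r::comm_ring_1)
     = fmult m (Poly_Mapping.single s 1) (Poly_Mapping.single t 1)"
  by (subst fmult_eq_sum_over[where S = "{s}" and T = "{t}"]) auto

lemma Mgenerated_fgen: "Mgenerated fsmult fmult (range fgen) = (UNIV :: ('x, 'm, 'r::comm_ring_1) freealg set)"
proof -
  have "f \<in> B" if B: "Mclosed fsmult fmult B" and gens: "range fgen \<subseteq> B"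
    for B and f :: "('x, 'm, 'r) freealg"
  proof -
    have monomial: "Poly_Mapping.single w 1 \<in> B" for w
    proof (induction w)
      case (Gen x)
      then show ?case using gens by (auto simp: fgen_def)
    next
      case (Op s m t)
      then show ?case using B by (simp add: single_Op Mclosed_def)
    qed
    have "f = (\<Sum>s\<in>Poly_Mapping.keys f. fsmult (Poly_Mapping.lookup f s) (Poly_Mapping.single s 1))"
      using poly_mapping_sum_single[of "Poly_Mapping.keys f" f] by (simp add: fsmult_single)
    also have "\<dots> \<in> B"
      using B monomial by (intro Mclosed_sum) (auto simp: Mclosed_def)
    finally show ?thesis .
  qed
  then show ?thesis unfolding Mgenerated_def by blast
qed

corollary Mhom_free_eqI:
  assumes "Mhom fsmult fmult sc mul f" "Mhom fsmult fmult sc mul g" "\<And>x. f (fgen x) = g (fgen x)"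
  shows "f = g"
  using Mhom_eqI_generated[OF Mgenerated_fgen assms(1,2)] assms(3) by blast

lemma Mhom_descends:
  fixes \<eta> :: "'a::ab_group_add \<Rightarrow> 'b::ab_group_add"
  assumes \<eta>: "Mhom sc1 mul1 sc2 mul2 \<eta>" "surj \<eta>" and \<phi>: "Mhom sc1 mul1 sc1 mul1 \<phi>"
    and ker: "\<And>f. \<eta> f = 0 \<Longrightarrow> \<eta> (\<phi> f) = 0"
  obtains \<theta> where "Mhom sc2 mul2 sc2 mul2 \<theta>" "\<theta> \<circ> \<eta> = \<eta> \<circ> \<phi>"
proof
  define \<theta> where "\<theta> a = \<eta> (\<phi> (SOME f. \<eta> f = a))" for a
  have well_defined: "\<eta> (\<phi> f) = \<eta> (\<phi> g)" if "\<eta> f = \<eta> g" for f g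
    using ker[of "f - g"] that by (simp add: Mhom_diff[OF \<eta>(1)] Mhom_diff[OF \<phi>])
  have \<theta>_\<eta>: "\<theta> (\<eta> f) = \<eta> (\<phi> f)" for f
    unfolding \<theta>_def by (rule well_defined) (rule someI[of "\<lambda>g. \<eta> g = \<eta> f" f], rule refl)
  then show "\<theta> \<circ> \<eta> = \<eta> \<circ> \<phi>" by auto
  show "Mhom sc2 mul2 sc2 mul2 \<theta>"
    unfolding Mhom_def
  proof (intro conjI allI)
    fix a b r m
    obtain f g where ab: "a = \<eta> f" "b = \<eta> g" using \<open>surj \<eta>\<close> by (metis surjD)
    show "\<theta> (a + b) = \<theta> a + \<theta> b"
      by (simp only: ab Mhom_add[OF \<eta>(1), symmetric] \<theta>_\<eta> Mhom_add[OF \<phi>])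
    show "\<theta> (sc2 r a) = sc2 r (\<theta> a)"
      by (simp only: ab Mhom_sc[OF \<eta>(1), symmetric] \<theta>_\<eta> Mhom_sc[OF \<phi>])
    show "\<theta> (mul2 m a b) = mul2 m (\<theta> a) (\<theta> b)"
      by (simp only: ab Mhom_mul[OF \<eta>(1), symmetric] \<theta>_\<eta> Mhom_mul[OF \<phi>])
  qed
qed

lemma image_eq_if_inverse:
  assumes "\<And>x. \<phi> (\<psi> x) = x" "\<phi> ` K \<subseteq> K" "\<psi> ` K \<subseteq> K"
  shows "\<phi> ` K = K"
  using assms by (metis image_subset_iff subsetI subset_antisym image_eqI)

lemma Maut_descends:
  fixes \<eta> :: "'a::ab_group_add \<Rightarrow> 'b::ab_group_add"
  assumes \<eta>: "Mhom sc1 mul1 sc2 mul2 \<eta>" "surj \<eta>" and "\<phi> \<in> Maut sc1 mul1"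
    and ker: "\<phi> ` {f. \<eta> f = 0} = {f. \<eta> f = 0}"
  obtains \<theta> where "\<theta> \<in> Maut sc2 mul2" "\<theta> \<circ> \<eta> = \<eta> \<circ> \<phi>"
proof -
  have \<phi>: "Mhom sc1 mul1 sc1 mul1 \<phi>" "bij \<phi>"
    using \<open>\<phi> \<in> Maut sc1 mul1\<close> by (auto simp: Maut_def)
  have ker_inv: "inv \<phi> ` {f. \<eta> f = 0} = {f. \<eta> f = 0}"
    using image_inv_f_f[OF bij_is_inj[OF \<phi>(2)]] ker by metis
  obtain \<theta> where \<theta>: "Mhom sc2 mul2 sc2 mul2 \<theta>" "\<theta> \<circ> \<eta> = \<eta> \<circ> \<phi>"
    using Mhom_descends[OF \<eta> \<phi>(1)] ker by blast
  obtain \<theta>' where \<theta>': "Mhom sc2 mul2 sc2 mul2 \<theta>'" "\<theta>' \<circ> \<eta> = \<eta> \<circ> inv \<phi>"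
    using Mhom_descends[OF \<eta> Mhom_inv[OF \<phi>]] ker_inv by blast
  have "\<theta> \<circ> \<theta>' = id"
    using \<theta>(2) \<theta>'(2) bij_is_surj[OF \<phi>(2)]
    by (intro surj_fun_eq[OF \<eta>(2)]) (auto simp: fun_eq_iff surj_f_inv_f)
  moreover have "\<theta>' \<circ> \<theta> = id"
    using \<theta>(2) \<theta>'(2) bij_is_inj[OF \<phi>(2)]
    by (intro surj_fun_eq[OF \<eta>(2)]) (auto simp: fun_eq_iff)
  ultimately have "bij \<theta>"
    using o_bij by blast
  then show thesis
    using that \<theta> by (simp add: Maut_def)
qed

section \<open>Linear extensions into an M-algebra\<close>

locale Malgebra =
  fixes sc :: "'r::comm_ring_1 \<Rightarrow> 'a::ab_group_add \<Rightarrow> 'a" and mul :: "'m \<Rightarrow> 'a \<Rightarrow> 'a \<Rightarrow> 'a"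
  assumes Malg: "Malg sc mul"
begin

lemma sc_add_right: "sc r (a + b) = sc r a + sc r b"
  and sc_add_left: "sc (r + s) a = sc r a + sc s a"
  and sc_mult: "sc (r * s) a = sc r (sc s a)"
  and sc_one: "sc 1 a = a"
  and mul_add_left: "mul m (a + b) c = mul m a c + mul m b c"
  and mul_add_right: "mul m a (b + c) = mul m a b + mul m a c"
  and mul_sc_left: "mul m (sc r a) b = sc r (mul m a b)"
  and mul_sc_right: "mul m a (sc r b) = sc r (mul m a b)"
  using Malg unfolding Malg_def by simp_all

lemma sc_zero_right: "sc r 0 = 0"
  by (rule additive_zero) (rule sc_add_right)

lemma sc_zero_left: "sc 0 a = 0"
  using additive_zero[of "\<lambda>r. sc r a"] sc_add_left by blast

lemma sc_sum: "sc r (\<Sum>i\<in>I. g i) = (\<Sum>i\<in>I. sc r (g i))"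
  by (induction I rule: infinite_finite_induct) (simp_all add: sc_add_right sc_zero_right)

lemma mul_sum_left: "mul m (\<Sum>i\<in>I. g i) b = (\<Sum>i\<in>I. mul m (g i) b)"
  using additive_zero[of "\<lambda>a. mul m a b"] mul_add_left
  by (induction I rule: infinite_finite_induct) auto

lemma mul_sum_right: "mul m b (\<Sum>i\<in>I. g i) = (\<Sum>i\<in>I. mul m b (g i))"
  using additive_zero[of "\<lambda>a. mul m b a"] mul_add_right
  by (induction I rule: infinite_finite_induct) auto

definition lin_ext :: "(('x, 'm) magma \<Rightarrow> 'a) \<Rightarrow> ('x, 'm, 'r) freealg \<Rightarrow> 'a" where
  "lin_ext v f = (\<Sum>s\<in>Poly_Mapping.keys f. sc (Poly_Mapping.lookup f s) (v s))"

lemma lin_ext_sum_over: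
  "finite S \<Longrightarrow> Poly_Mapping.keys f \<subseteq> S \<Longrightarrow> lin_ext v f = (\<Sum>s\<in>S. sc (Poly_Mapping.lookup f s) (v s))"
  unfolding lin_ext_def by (intro sum.mono_neutral_left) (auto simp: in_keys_iff sc_zero_left)

lemma lin_ext_add: "lin_ext v (f + g) = lin_ext v f + lin_ext v g"
  by (subst (1 2 3) lin_ext_sum_over[where S = "Poly_Mapping.keys f \<union> Poly_Mapping.keys g"])
     (auto simp: keys_add lookup_add sc_add_left sum.distrib)

lemma lin_ext_fsmult: "lin_ext v (fsmult r f) = sc r (lin_ext v f)"
  by (subst (1 2) lin_ext_sum_over[where S = "Poly_Mapping.keys f"])
     (auto simp: keys_fsmult lookup_fsmult sc_mult sc_sum)

lemma lin_ext_single: "lin_ext v (Poly_Mapping.single w c) = sc c (v w)"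
  by (subst lin_ext_sum_over[where S = "{w}"]) auto

lemma lin_ext_sum: "lin_ext v (\<Sum>i\<in>I. g i) = (\<Sum>i\<in>I. lin_ext v (g i))"
  by (induction I rule: infinite_finite_induct) (simp_all add: lin_ext_add lin_ext_def[of _ 0])

primrec magma_eval :: "('x \<Rightarrow> 'a) \<Rightarrow> ('x, 'm) magma \<Rightarrow> 'a" where
  "magma_eval g (Gen x) = g x"
| "magma_eval g (Op s m t) = mul m (magma_eval g s) (magma_eval g t)"

definition free_ext :: "('x \<Rightarrow> 'a) \<Rightarrow> ('x, 'm, 'r) freealg \<Rightarrow> 'a" where
  "free_ext g = lin_ext (magma_eval g)"

lemma free_ext_fgen: "free_ext g (fgen x) = g x"
  by (simp add: free_ext_def fgen_def lin_ext_single sc_one)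

lemma Mhom_free_ext: "Mhom fsmult fmult sc mul (free_ext (g :: 'x \<Rightarrow> 'a))"
  unfolding Mhom_def free_ext_def
proof (intro conjI allI)
  fix a b :: "('x, 'm, 'r) freealg" and r m
  let ?v = "magma_eval g"
  show "lin_ext ?v (a + b) = lin_ext ?v a + lin_ext ?v b" by (rule lin_ext_add)
  show "lin_ext ?v (fsmult r a) = sc r (lin_ext ?v a)" by (rule lin_ext_fsmult)
  have "lin_ext ?v (fmult m a b) = (\<Sum>s\<in>Poly_Mapping.keys a. \<Sum>t\<in>Poly_Mapping.keys b.
      sc (Poly_Mapping.lookup a s * Poly_Mapping.lookup b t) (mul m (?v s) (?v t)))"
    unfolding fmult_def lin_ext_sum lin_ext_single by simp
  also have "\<dots> = (\<Sum>s\<in>Poly_Mapping.keys a. \<Sum>t\<in>Poly_Mapping.keys b.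
      mul m (sc (Poly_Mapping.lookup a s) (?v s)) (sc (Poly_Mapping.lookup b t) (?v t)))"
    by (simp add: mul_sc_left mul_sc_right sc_mult[symmetric] mult.commute)
  also have "\<dots> = mul m (lin_ext ?v a) (lin_ext ?v b)"
    unfolding lin_ext_def mul_sum_left by (simp only: mul_sum_right)
  finally show "lin_ext ?v (fmult m a b) = mul m (lin_ext ?v a) (lin_ext ?v b)" .
qed

lemma range_subset_Rspan: "range e \<subseteq> Rspan sc e"
  unfolding Rspan_def by (force intro: exI[of _ "\<lambda>_. 1"] exI[of _ "{_}"] simp: sc_one)

lemma MautF_Rspan_gens: "\<theta> \<in> MautF sc mul (Rspan sc e) \<Longrightarrow> \<theta> ` range e \<subseteq> Rspan sc e"
  using range_subset_Rspan[of e] unfolding MautF_def by blast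

lemma Mgenerated_Rspan: "Mgenerated sc mul (Rspan sc e) = Mgenerated sc mul (range e)"
proof -
  have "Rspan sc e \<subseteq> B" if B: "Mclosed sc mul B" and "range e \<subseteq> B" for B
  proof -
    have "sc r (e x) \<in> B" for r x
      using B rangeI[of e x] \<open>range e \<subseteq> B\<close> unfolding Mclosed_def by blast
    then show ?thesis
      unfolding Rspan_def using B by (auto intro!: Mclosed_sum)
  qed
  then show ?thesis
    using range_subset_Rspan[of e] unfolding Mgenerated_def by blast
qed

end

lemma Malgebra_free: "Malgebra fsmult fmult"
  by unfold_locales (rule Malg_free)

section \<open>The copy of F\<close>

lemma fsmult_fgen: "fsmult c (fgen x) = Poly_Mapping.single (Gen x) c"
  by (simp add: fgen_def fsmult_single)

lemma sum_fgen_expansion: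
  assumes "finite S" "Poly_Mapping.keys f \<subseteq> Gen ` S"
  shows "f = (\<Sum>x\<in>S. fsmult (Poly_Mapping.lookup f (Gen x)) (fgen x))"
proof -
  have "f = (\<Sum>s\<in>Gen ` S. Poly_Mapping.single s (Poly_Mapping.lookup f s))"
    using assms by (intro poly_mapping_sum_single) auto
  also have "\<dots> = (\<Sum>x\<in>S. fsmult (Poly_Mapping.lookup f (Gen x)) (fgen x))"
    by (subst sum.reindex) (simp_all add: inj_on_def fsmult_fgen)
  finally show ?thesis .
qed

lemma finite_Gen_vimage: "finite (Gen -` Poly_Mapping.keys f)"
  by (rule finite_vimageI) (auto simp: inj_def)

lemma freeF_eq: "(freeF :: ('x, 'm, 'r::comm_ring_1) freealg set) = {f. Poly_Mapping.keys f \<subseteq> range Gen}"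
proof (intro set_eqI iffI)
  fix f :: "('x, 'm, 'r) freealg"
  assume "f \<in> freeF"
  then obtain S c where f: "f = (\<Sum>x\<in>S. fsmult (c x) (fgen x))"
    unfolding freeF_def Rspan_def by blast
  have "Poly_Mapping.keys f \<subseteq> (\<Union>x\<in>S. Poly_Mapping.keys (fsmult (c x) (fgen x)))"
    unfolding f by (rule keys_sum)
  also have "\<dots> \<subseteq> range Gen"
    by (auto simp: fsmult_fgen)
  finally show "f \<in> {f. Poly_Mapping.keys f \<subseteq> range Gen}"
    by simp
next
  fix f :: "('x, 'm, 'r) freealg"
  assume "f \<in> {f. Poly_Mapping.keys f \<subseteq> range Gen}"
  then have "f = (\<Sum>x\<in>Gen -` Poly_Mapping.keys f. fsmult (Poly_Mapping.lookup f (Gen x)) (fgen x))"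
    by (intro sum_fgen_expansion finite_Gen_vimage) auto
  then show "f \<in> freeF"
    unfolding freeF_def Rspan_def mem_Collect_eq using finite_Gen_vimage[of f]
    by (intro exI[of _ "Gen -` Poly_Mapping.keys f"] exI[of _ "\<lambda>x. Poly_Mapping.lookup f (Gen x)"]) simp
qed

lemma fgen_in_freeF: "fgen x \<in> freeF"
  by (simp add: freeF_eq fgen_def)

lemma diff_in_freeF: "f \<in> freeF \<Longrightarrow> g \<in> freeF \<Longrightarrow> f - g \<in> freeF"
  using keys_diff[of f g] by (auto simp: freeF_eq)

lemma zero_in_freeF: "0 \<in> freeF"
  by (simp add: freeF_eq)

lemma add_in_freeF: "f \<in> freeF \<Longrightarrow> g \<in> freeF \<Longrightarrow> f + g \<in> freeF"
  using keys_add[of f g] by (auto simp: freeF_eq)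

lemma fsmult_in_freeF: "f \<in> freeF \<Longrightarrow> fsmult r f \<in> freeF"
  using keys_fsmult[of r f] by (auto simp: freeF_eq)

lemma sum_fsmult_in_freeF:
  "(\<And>i. i \<in> I \<Longrightarrow> g i \<in> freeF) \<Longrightarrow> (\<Sum>i\<in>I. fsmult (c i) (g i)) \<in> freeF"
  by (induction I rule: infinite_finite_induct) (simp_all add: add_in_freeF fsmult_in_freeF zero_in_freeF)

lemma Mhom_image_freeF:
  assumes "Mhom fsmult fmult fsmult fmult \<phi>" "\<And>x. \<phi> (fgen x) \<in> freeF"
  shows "\<phi> ` freeF \<subseteq> freeF"
proof
  fix f assume "f \<in> \<phi> ` freeF"
  then obtain S c where "f = \<phi> (\<Sum>x\<in>S. fsmult (c x) (fgen x))"
    unfolding freeF_def Rspan_def by blast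
  then show "f \<in> freeF"
    using assms by (simp add: Mhom_sum_sc sum_fsmult_in_freeF)
qed

context Malgebra
begin

lemma Fiso_eq_lin_ext: "(Fiso sc e :: ('x, 'm, 'r) freealg \<Rightarrow> 'a) = lin_ext (case_magma e (\<lambda>_ _ _. 0))"
  unfolding Fiso_def lin_ext_def
  by (intro ext sum.cong refl) (auto split: magma.split simp: sc_zero_right)

lemma Fiso_diff: "Fiso sc e (f - g :: ('x, 'm, 'r) freealg) = Fiso sc e f - Fiso sc e g"
  using lin_ext_add[of _ "f - g" g] by (simp add: Fiso_eq_lin_ext eq_diff_eq)

lemma Fiso_sum_fgen:
  "Fiso sc e (\<Sum>x\<in>S. fsmult (c x) (fgen x) :: ('x, 'm, 'r) freealg) = (\<Sum>x\<in>S. sc (c x) (e x))"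
  by (simp add: Fiso_eq_lin_ext lin_ext_sum lin_ext_fsmult lin_ext_single fgen_def sc_one)

lemma Fiso_image: "Fiso sc e ` (freeF :: ('x, 'm, 'r) freealg set) = Rspan sc e"
proof -
  have "Fiso sc e ` (freeF :: ('x, 'm, 'r) freealg set)
      = (\<lambda>(S, c). Fiso sc e (\<Sum>x\<in>S. fsmult (c x) (fgen x) :: ('x, 'm, 'r) freealg)) ` {(S, c). finite S}"
    unfolding freeF_def Rspan_def by auto
  also have "\<dots> = (\<lambda>(S, c). \<Sum>x\<in>S. sc (c x) (e x)) ` {(S, c). finite S}"
    by (simp add: Fiso_sum_fgen)
  also have "\<dots> = Rspan sc e"
    unfolding Rspan_def by auto
  finally show ?thesis .
qed

lemma Mhom_eq_Fiso_on_freeF: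
  assumes "Mhom fsmult fmult sc mul \<eta>" "\<And>x. \<eta> (fgen x) = e x" "f \<in> freeF"
  shows "\<eta> f = Fiso sc e f"
proof -
  obtain S c where "f = (\<Sum>x\<in>S. fsmult (c x) (fgen x))"
    using \<open>f \<in> freeF\<close> unfolding freeF_def Rspan_def by blast
  then show ?thesis
    using assms(1,2) by (simp add: Mhom_sum_sc Fiso_sum_fgen)
qed

lemma inj_on_Fiso:
  assumes indep: "Rindep sc e"
  shows "inj_on (Fiso sc e) (freeF :: ('x, 'm, 'r) freealg set)"
proof -
  have zero: "h = 0" if "h \<in> freeF" "Fiso sc e h = 0" for h :: "('x, 'm, 'r) freealg"
  proof -
    let ?S = "Gen -` Poly_Mapping.keys h"
    have "h = (\<Sum>x\<in>?S. fsmult (Poly_Mapping.lookup h (Gen x)) (fgen x))"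
      using \<open>h \<in> freeF\<close> by (intro sum_fgen_expansion finite_Gen_vimage) (auto simp: freeF_eq)
    then have "(\<Sum>x\<in>?S. sc (Poly_Mapping.lookup h (Gen x)) (e x)) = 0"
      using \<open>Fiso sc e h = 0\<close> Fiso_sum_fgen by metis
    then have "\<forall>x\<in>?S. Poly_Mapping.lookup h (Gen x) = 0"
      using indep finite_Gen_vimage unfolding Rindep_def by (elim allE impE)
    then have "Poly_Mapping.keys h \<inter> range Gen = {}"
      by (auto simp: in_keys_iff)
    moreover have "Poly_Mapping.keys h \<subseteq> range Gen"
      using \<open>h \<in> freeF\<close> by (simp add: freeF_eq)
    ultimately show "h = 0"
      by (metis Int_absorb2 keys_eq_empty)
  qed
  show ?thesis
  proof (rule inj_onI)
    fix f g :: "('x, 'm, 'r) freealg"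
    assume "f \<in> freeF" "g \<in> freeF" "Fiso sc e f = Fiso sc e g"
    then have "f - g = 0"
      by (intro zero) (simp_all add: diff_in_freeF Fiso_diff)
    then show "f = g" by simp
  qed
qed

end

section \<open>Lifting automorphisms to the free M-algebra\<close>

locale free_presentation = Malgebra sc mul
  for sc :: "'r::comm_ring_1 \<Rightarrow> 'a::ab_group_add \<Rightarrow> 'a" and mul :: "'m \<Rightarrow> 'a \<Rightarrow> 'a \<Rightarrow> 'a" +
  fixes e :: "'x \<Rightarrow> 'a"
  assumes indep: "Rindep sc e"
    and gen: "Mgenerated sc mul (Rspan sc e) = UNIV"
begin

definition eta :: "('x, 'm, 'r) freealg \<Rightarrow> 'a" where
  "eta = free_ext e"

lemma Mhom_eta: "Mhom fsmult fmult sc mul eta"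
  by (simp add: eta_def Mhom_free_ext)

lemma eta_fgen: "eta (fgen x) = e x"
  by (simp add: eta_def free_ext_fgen)

lemma surj_eta: "surj eta"
proof (rule Mhom_surj_generated[OF _ Mhom_eta])
  show "Mgenerated sc mul (range e) = UNIV"
    using gen by (simp only: Mgenerated_Rspan)
  show "range e \<subseteq> range eta"
    by (metis eta_fgen image_subsetI rangeI)
qed

lemma eta_unique: "Mhom fsmult fmult sc mul \<eta> \<Longrightarrow> (\<And>x. \<eta> (fgen x) = e x) \<Longrightarrow> \<eta> = eta"
  using Mhom_eta eta_fgen by (intro Mhom_free_eqI) auto

lemma eta_eq_Fiso: "f \<in> freeF \<Longrightarrow> eta f = Fiso sc e f"
  by (rule Mhom_eq_Fiso_on_freeF[OF Mhom_eta eta_fgen])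

lemma eta_image_freeF: "eta ` freeF = Rspan sc e"
  using Fiso_image[of e] eta_eq_Fiso by (metis image_cong)

abbreviation lift :: "('a \<Rightarrow> 'a) \<Rightarrow> ('x, 'm, 'r) freealg \<Rightarrow> ('x, 'm, 'r) freealg" where
  "lift \<theta> \<equiv> tilde sc e \<theta>"

definition lifts :: "('a \<Rightarrow> 'a) \<Rightarrow> (('x, 'm, 'r) freealg \<Rightarrow> ('x, 'm, 'r) freealg) \<Rightarrow> bool" where
  "lifts \<theta> \<phi> \<longleftrightarrow> Mhom fsmult fmult fsmult fmult \<phi>
     \<and> (\<forall>x. \<phi> (fgen x) \<in> freeF \<and> Fiso sc e (\<phi> (fgen x)) = \<theta> (e x))"

lemma lifts_unique: "lifts \<theta> \<phi> \<Longrightarrow> lifts \<theta> \<psi> \<Longrightarrow> \<phi> = \<psi>"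
  unfolding lifts_def
  by (intro Mhom_free_eqI inj_onD[OF inj_on_Fiso[OF indep]]) auto

lemma lift_eqI:
  assumes "lifts \<theta> \<phi>"
  shows "lift \<theta> = \<phi>"
proof -
  have "(THE \<psi>. lifts \<theta> \<psi>) = \<phi>"
    by (rule the_equality) (use assms lifts_unique in blast)+
  then show ?thesis
    by (simp add: tilde_def lifts_def)
qed

lemma lifts_lift:
  assumes "\<theta> ` range e \<subseteq> Rspan sc e"
  shows "lifts \<theta> (lift \<theta>)"
proof -
  have "\<theta> (e x) \<in> Fiso sc e ` (freeF :: ('x, 'm, 'r) freealg set)" for x
    using assms unfolding Fiso_image by blast
  then have "\<forall>x. \<exists>f :: ('x, 'm, 'r) freealg. f \<in> freeF \<and> Fiso sc e f = \<theta> (e x)"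
    by (metis imageE)
  then obtain g :: "'x \<Rightarrow> ('x, 'm, 'r) freealg" where g: "\<forall>x. g x \<in> freeF \<and> Fiso sc e (g x) = \<theta> (e x)"
    by (rule choice[THEN exE]) blast
  let ?\<phi> = "Malgebra.free_ext fsmult fmult g"
  have "Mhom fsmult fmult fsmult fmult ?\<phi>"
    by (rule Malgebra.Mhom_free_ext[OF Malgebra_free])
  moreover have "?\<phi> (fgen x) = g x" for x
    by (rule Malgebra.free_ext_fgen[OF Malgebra_free])
  ultimately have "lifts \<theta> ?\<phi>"
    unfolding lifts_def using g by simp
  then show ?thesis
    by (simp add: lift_eqI)
qed

lemma lifts_image_freeF: "lifts \<theta> \<phi> \<Longrightarrow> \<phi> ` freeF \<subseteq> freeF"
  unfolding lifts_def by (intro Mhom_image_freeF) auto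

lemma eta_lift:
  assumes \<theta>: "Mhom sc mul sc mul \<theta>" and "\<theta> ` range e \<subseteq> Rspan sc e"
  shows "eta \<circ> lift \<theta> = \<theta> \<circ> eta"
proof (rule Mhom_free_eqI)
  have "lifts \<theta> (lift \<theta>)"
    using assms(2) by (rule lifts_lift)
  then have hom: "Mhom fsmult fmult fsmult fmult (lift \<theta>)"
    and gens: "\<And>x. lift \<theta> (fgen x) \<in> freeF \<and> Fiso sc e (lift \<theta> (fgen x)) = \<theta> (e x)"
    unfolding lifts_def by auto
  show "Mhom fsmult fmult sc mul (eta \<circ> lift \<theta>)"
    using hom Mhom_eta by (rule Mhom_comp)
  show "Mhom fsmult fmult sc mul (\<theta> \<circ> eta)"
    using Mhom_eta \<theta> by (rule Mhom_comp)
  show "(eta \<circ> lift \<theta>) (fgen x) = (\<theta> \<circ> eta) (fgen x)" for x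
    using gens[of x] by (simp add: eta_eq_Fiso eta_fgen)
qed

lemma lift_comp:
  assumes "Mhom sc mul sc mul \<theta>" "\<theta> ` range e \<subseteq> Rspan sc e" "\<theta>' ` range e \<subseteq> Rspan sc e"
  shows "lift (\<theta> \<circ> \<theta>') = lift \<theta> \<circ> lift \<theta>'"
proof (rule lift_eqI)
  note lift\<theta> = lifts_lift[OF assms(2)] and lift\<theta>' = lifts_lift[OF assms(3)]
  have image: "lift \<theta> ` freeF \<subseteq> freeF"
    using lift\<theta> by (rule lifts_image_freeF)
  show "lifts (\<theta> \<circ> \<theta>') (lift \<theta> \<circ> lift \<theta>')"
    unfolding lifts_def
  proof (intro conjI allI)
    show "Mhom fsmult fmult fsmult fmult (lift \<theta> \<circ> lift \<theta>')"
      using lift\<theta> lift\<theta>' unfolding lifts_def by (blast intro: Mhom_comp)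
    fix x
    have "lift \<theta>' (fgen x) \<in> freeF" "Fiso sc e (lift \<theta>' (fgen x)) = \<theta>' (e x)"
      using lift\<theta>' unfolding lifts_def by blast+
    then have "lift \<theta> (lift \<theta>' (fgen x)) \<in> freeF"
      and "Fiso sc e (lift \<theta> (lift \<theta>' (fgen x))) = \<theta> (\<theta>' (e x))"
      using image eta_lift[OF assms(1,2)]
      by (auto simp: eta_eq_Fiso[symmetric] fun_eq_iff)
    then show "(lift \<theta> \<circ> lift \<theta>') (fgen x) \<in> freeF"
      and "Fiso sc e ((lift \<theta> \<circ> lift \<theta>') (fgen x)) = (\<theta> \<circ> \<theta>') (e x)"
      by simp_all
  qed
qed

lemma lift_id: "lift id = id"
  by (rule lift_eqI) (simp add: lifts_def Mhom_def fgen_in_freeF eta_fgen eta_eq_Fiso[symmetric])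

lemma lift_inv:
  assumes "\<theta> \<in> MautF sc mul (Rspan sc e)"
  shows "lift \<theta> \<circ> lift (inv \<theta>) = id" "lift (inv \<theta>) \<circ> lift \<theta> = id"
proof -
  have inv: "inv \<theta> \<in> MautF sc mul (Rspan sc e)"
    using assms by (rule MautF_inv)
  have hom: "Mhom sc mul sc mul \<theta>" "Mhom sc mul sc mul (inv \<theta>)" and "bij \<theta>"
    using assms inv by (auto simp: MautF_def Maut_def)
  have "\<theta> \<circ> inv \<theta> = id" "inv \<theta> \<circ> \<theta> = id"
    using bij_is_surj[OF \<open>bij \<theta>\<close>] bij_is_inj[OF \<open>bij \<theta>\<close>] by (simp_all add: surj_iff inj_iff)
  moreover note gens = MautF_Rspan_gens[OF assms] MautF_Rspan_gens[OF inv]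
  ultimately show "lift \<theta> \<circ> lift (inv \<theta>) = id" "lift (inv \<theta>) \<circ> lift \<theta> = id"
    using lift_comp[OF hom(1) gens] lift_comp[OF hom(2) gens(2,1)] by (simp_all add: lift_id)
qed

lemma lift_in_MautF:
  assumes "\<theta> \<in> MautF sc mul (Rspan sc e)"
  shows "lift \<theta> \<in> MautF fsmult fmult freeF"
proof -
  note inverse = lift_inv[OF assms]
  have lifts: "lifts \<theta> (lift \<theta>)" "lifts (inv \<theta>) (lift (inv \<theta>))"
    using lifts_lift MautF_Rspan_gens assms MautF_inv by blast+
  have "Mhom fsmult fmult fsmult fmult (lift \<theta>)"
    using lifts(1) by (simp add: lifts_def)
  moreover note lifts_image_freeF[OF lifts(1)] lifts_image_freeF[OF lifts(2)]
  moreover have "lift \<theta> ` freeF = freeF"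
    using calculation(2,3) inverse(1)
    by (intro image_eq_if_inverse[of "lift \<theta>" "lift (inv \<theta>)"]) (auto simp: fun_eq_iff)
  moreover have "bij (lift \<theta>)"
    using inverse(2,1) by (rule o_bij)
  ultimately show ?thesis
    by (simp add: MautF_def Maut_def)
qed

lemma inj_on_lift: "inj_on lift (MautF sc mul (Rspan sc e))"
proof (rule inj_onI)
  fix \<theta> \<theta>'
  assume \<theta>: "\<theta> \<in> MautF sc mul (Rspan sc e)" and \<theta>': "\<theta>' \<in> MautF sc mul (Rspan sc e)"
    and "lift \<theta> = lift \<theta>'"
  then have "\<theta> (e x) = \<theta>' (e x)" for x
    using lifts_lift[OF MautF_Rspan_gens[OF \<theta>]] lifts_lift[OF MautF_Rspan_gens[OF \<theta>']]
    unfolding lifts_def by metis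
  moreover have "Mgenerated sc mul (range e) = UNIV"
    using gen by (simp only: Mgenerated_Rspan)
  ultimately show "\<theta> = \<theta>'"
    using \<theta> \<theta>' by (intro Mhom_eqI_generated[of sc mul "range e"]) (auto simp: MautF_def Maut_def)
qed

lemma lift_kernel:
  assumes "\<theta> \<in> MautF sc mul (Rspan sc e)"
  shows "lift \<theta> ` {f. eta f = 0} = {f. eta f = 0}"
proof -
  have maps: "lift \<theta>' ` {f. eta f = 0} \<subseteq> {f. eta f = 0}" if "\<theta>' \<in> MautF sc mul (Rspan sc e)" for \<theta>'
  proof (rule image_subsetI)
    fix f assume "f \<in> {f. eta f = 0}"
    have hom: "Mhom sc mul sc mul \<theta>'"
      using that by (simp add: MautF_def Maut_def)
    have "eta (lift \<theta>' f) = \<theta>' (eta f)"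
      using fun_cong[OF eta_lift[OF hom MautF_Rspan_gens[OF that]], of f] by simp
    then show "lift \<theta>' f \<in> {f. eta f = 0}"
      using \<open>f \<in> {f. eta f = 0}\<close> Mhom_zero[OF hom] by simp
  qed
  show ?thesis
    using fun_cong[OF lift_inv(1)[OF assms]] maps[OF assms] maps[OF MautF_inv[OF assms]]
    by (intro image_eq_if_inverse[of "lift \<theta>" "lift (inv \<theta>)"]) simp_all
qed

lemma lift_image_MautF_if_kernel:
  assumes \<phi>: "\<phi> \<in> MautF fsmult fmult freeF" and ker: "\<phi> ` {f. eta f = 0} = {f. eta f = 0}"
  shows "\<phi> \<in> lift ` MautF sc mul (Rspan sc e)"
proof -
  have "\<phi> \<in> Maut fsmult fmult"
    using \<phi> by (simp add: MautF_def)
  then obtain \<theta> where \<theta>: "\<theta> \<in> Maut sc mul" "\<theta> \<circ> eta = eta \<circ> \<phi>"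
    using Maut_descends[OF Mhom_eta surj_eta _ ker] by blast
  have \<phi>_freeF: "\<phi> ` freeF = freeF" and "Mhom fsmult fmult fsmult fmult \<phi>"
    using \<phi> by (auto simp: MautF_def Maut_def)
  have "\<theta> ` Rspan sc e = (\<theta> \<circ> eta) ` freeF"
    by (simp add: eta_image_freeF[symmetric] image_comp)
  also have "\<dots> = eta ` \<phi> ` freeF"
    by (simp add: \<theta>(2) image_comp)
  also have "\<dots> = Rspan sc e"
    by (simp add: \<phi>_freeF eta_image_freeF)
  finally have "\<theta> \<in> MautF sc mul (Rspan sc e)"
    using \<theta>(1) by (simp add: MautF_def)
  moreover have "lifts \<theta> \<phi>"
    unfolding lifts_def
  proof (intro conjI allI)
    fix x
    show "\<phi> (fgen x) \<in> freeF"
      using imageI[OF fgen_in_freeF, of \<phi> x] by (simp only: \<phi>_freeF)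
    then have "Fiso sc e (\<phi> (fgen x)) = eta (\<phi> (fgen x))"
      by (simp add: eta_eq_Fiso)
    also have "\<dots> = \<theta> (e x)"
      using fun_cong[OF \<theta>(2), of "fgen x"] by (simp add: eta_fgen)
    finally show "Fiso sc e (\<phi> (fgen x)) = \<theta> (e x)" .
  qed fact
  ultimately show ?thesis
    using lift_eqI by (metis imageI)
qed

lemma lift_image_MautF:
  "lift ` MautF sc mul (Rspan sc e) = {\<phi> \<in> MautF fsmult fmult freeF. \<phi> ` {f. eta f = 0} = {f. eta f = 0}}"
proof
  show "lift ` MautF sc mul (Rspan sc e) \<subseteq> {\<phi> \<in> MautF fsmult fmult freeF. \<phi> ` {f. eta f = 0} = {f. eta f = 0}}"
    using lift_in_MautF lift_kernel by (intro image_subsetI CollectI conjI)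
  show "{\<phi> \<in> MautF fsmult fmult freeF. \<phi> ` {f. eta f = 0} = {f. eta f = 0}} \<subseteq> lift ` MautF sc mul (Rspan sc e)"
    using lift_image_MautF_if_kernel by (intro subsetI) simp
qed

end

theorem proposition2:
  fixes sc :: "'r::comm_ring_1 \<Rightarrow> 'a::ab_group_add \<Rightarrow> 'a"
    and mul :: "'m \<Rightarrow> 'a \<Rightarrow> 'a \<Rightarrow> 'a"
    and e :: "'x \<Rightarrow> 'a"
  assumes alg: "Malg sc mul"
    and indep: "Rindep sc e"
    and gen: "Mgenerated sc mul (Rspan sc e) = UNIV"
  shows "(\<forall>\<theta>\<in>MautF sc mul (Rspan sc e).
            tilde sc e \<theta> \<in> MautF fsmult fmult (freeF :: ('x, 'm, 'r) freealg set))
       \<and> (\<forall>\<theta>\<in>MautF sc mul (Rspan sc e). \<forall>\<theta>'\<in>MautF sc mul (Rspan sc e).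
            (tilde sc e (\<theta> \<circ> \<theta>') :: ('x, 'm, 'r) freealg \<Rightarrow> _) = tilde sc e \<theta> \<circ> tilde sc e \<theta>')
       \<and> inj_on (tilde sc e :: _ \<Rightarrow> ('x, 'm, 'r) freealg \<Rightarrow> _) (MautF sc mul (Rspan sc e))
       \<and> (\<exists>!\<eta> :: ('x, 'm, 'r) freealg \<Rightarrow> 'a.
            Mhom fsmult fmult sc mul \<eta> \<and> surj \<eta> \<and> (\<forall>x. \<eta> (fgen x) = e x))
       \<and> (\<forall>\<eta> :: ('x, 'm, 'r) freealg \<Rightarrow> 'a.
            Mhom fsmult fmult sc mul \<eta> \<and> surj \<eta> \<and> (\<forall>x. \<eta> (fgen x) = e x) \<longrightarrow>
            tilde sc e ` MautF sc mul (Rspan sc e)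
              = {\<phi> \<in> MautF fsmult fmult freeF. \<phi> ` {f. \<eta> f = 0} = {f. \<eta> f = 0}})"
proof -
  interpret free_presentation sc mul e
    by (simp add: free_presentation_def free_presentation_axioms_def Malgebra_def alg indep gen)
  have eta: "Mhom fsmult fmult sc mul eta \<and> surj eta \<and> (\<forall>x. eta (fgen x) = e x)"
    by (simp add: Mhom_eta surj_eta eta_fgen)
  show ?thesis
  proof (intro conjI ballI allI impI)
    show "lift \<theta> \<in> MautF fsmult fmult freeF" if "\<theta> \<in> MautF sc mul (Rspan sc e)" for \<theta>
      using that by (rule lift_in_MautF)
    show "lift (\<theta> \<circ> \<theta>') = lift \<theta> \<circ> lift \<theta>'"
      if "\<theta> \<in> MautF sc mul (Rspan sc e)" "\<theta>' \<in> MautF sc mul (Rspan sc e)" for \<theta> \<theta>'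
      using that by (intro lift_comp MautF_Rspan_gens) (simp_all add: MautF_def Maut_def)
    show "inj_on lift (MautF sc mul (Rspan sc e))"
      by (rule inj_on_lift)
    show "\<exists>!\<eta>. Mhom fsmult fmult sc mul \<eta> \<and> surj \<eta> \<and> (\<forall>x. \<eta> (fgen x) = e x)"
      using eta eta_unique by blast
    show "lift ` MautF sc mul (Rspan sc e)
        = {\<phi> \<in> MautF fsmult fmult freeF. \<phi> ` {f. \<eta> f = 0} = {f. \<eta> f = 0}}"
      if "Mhom fsmult fmult sc mul \<eta> \<and> surj \<eta> \<and> (\<forall>x. \<eta> (fgen x) = e x)" for \<eta>
      using that eta_unique lift_image_MautF by auto
  qed
qed

end
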